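(* Let $f$ be a scale mixture of normals (SMN) density with shape parameter $\delta\in\Delta\subset\mathbb{R}$, i.e. $f(z\mid\delta)=\int_{\mathbb{R}_+}\tau^{1/2}\phi(\tau^{1/2}z)\,dH(\tau\mid\delta)$, where $\phi$ is the standard normal density and $H(\cdot\mid\delta)$ is a mixing distribution on $\mathbb{R}_+$. Consider the linear regression model $y_j={\bf x}_j^{\top}\bm\beta+\varepsilon_j$, $j=1,\dots,n$, where $\bm\beta\in\mathbb{R}^p$, ${\bf X}=({\bf x}_1^\top,\dots,{\bf x}_n^\top)^\top$ is a known $n\times p$ design matrix of full column rank, and $\varepsilon_j\stackrel{i.i.d.}{\sim}\mathrm{TP}(0,\sigma,\delta,\gamma;f)$. Adopt the prior $\pi(\bm\beta,\sigma,\delta,\gamma)\propto \pi(\gamma)\pi(\delta)/\sigma^{q}$ with $q\ge 0$ and $\pi(\gamma)$, $\pi(\delta)$ proper priors on $\Gamma$ and $\Delta$. Consider the conditions: (i) the posterior of $(\bm\beta,\sigma,\delta)$ associated with the linear regression model $y_j={\bf x}_j^\top\bm\beta+\varepsilon_j$ with errors $\varepsilon_j$ i.i.d. with symmetric density $\sigma^{-1}f(\cdot/\sigma\mid\delta)$, together with the prior $\pi(\bm\beta,\sigma,\delta)\propto\sigma^{-q}\pi(\delta)$, is proper; (ii) $\int_{\Gamma}\frac{h(\gamma)^{n+q-1}}{[a(\gamma)+b(\gamma)]^n}\pi(\gamma)\,d\gamma<\infty$, where $h(\gamma)=\min\{a(\gamma),b(\gamma)\}$; (iii) $\int_{\Gamma}\frac{H(\gamma)^{n+q-1}}{[a(\gamma)+b(\gamma)]^n}\pi(\gamma)\,d\gamma<\infty$,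 where $H(\gamma)=\max\{a(\gamma),b(\gamma)\}$. Then (i) and (ii) are necessary conditions, and (i) and (iii) are sufficient conditions, for the propriety of the posterior distribution of $(\bm\beta,\sigma,\delta,\gamma)$.
   Context: The two-piece distribution $\mathrm{TP}(\mu,\sigma,\delta,\gamma;f)$, for a symmetric density $f(\cdot\mid\delta)$ on $\mathbb{R}$ with mode at $0$, has density $g(z\mid\mu,\sigma,\delta,\gamma)=\frac{2}{\sigma[a(\gamma)+b(\gamma)]}\left[f\!\left(\frac{z-\mu}{\sigma b(\gamma)}\Big|\delta\right)I(z<\mu)+f\!\left(\frac{z-\mu}{\sigma a(\gamma)}\Big|\delta\right)I(z\ge\mu)\right]$, $z\in\mathbb{R}$, where $\mu\in\mathbb{R}$, $\sigma>0$, $\gamma\in\Gamma\subset\mathbb{R}$ is a skewness parameter and $a(\cdot),b(\cdot)$ are given positive functions on $\Gamma$. The likelihood is $\prod_{j=1}^n g(y_j-{\bf x}_j^\top\bm\beta\mid 0,\sigma,\delta,\gamma)$, and the posterior is the (possibly improper) product of likelihood and prior; "proper" means that this product has finite integral over the parameter space. *)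

theory Defs
  imports "HOL-Probability.Probability"
begin

definition smn_density :: "(real \<Rightarrow> real measure) \<Rightarrow> real \<Rightarrow> real \<Rightarrow> ennreal" where
  "smn_density H z \<delta> = (\<integral>\<^sup>+ \<tau>. ennreal (sqrt \<tau> * std_normal_density (sqrt \<tau> * z)) \<partial>(H \<delta>))"

definition tp_density ::
  "(real \<Rightarrow> real \<Rightarrow> ennreal) \<Rightarrow> (real \<Rightarrow> real) \<Rightarrow> (real \<Rightarrow> real) \<Rightarrow>
   real \<Rightarrow> real \<Rightarrow> real \<Rightarrow> real \<Rightarrow> real \<Rightarrow> ennreal" where
  "tp_density f a b \<mu> \<sigma> \<delta> \<gamma> z =
     ennreal (2 / (\<sigma> * (a \<gamma> + b \<gamma>))) *
     (if z < \<mu> then f ((z - \<mu>) / (\<sigma> * b \<gamma>)) \<delta> else f ((z - \<mu>) / (\<sigma> * a \<gamma>)) \<delta>)"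

definition tp_posterior_mass ::
  "(real \<Rightarrow> real \<Rightarrow> ennreal) \<Rightarrow> (real \<Rightarrow> real) \<Rightarrow> (real \<Rightarrow> real) \<Rightarrow> nat \<Rightarrow>
   (nat \<Rightarrow> real ^ 'p) \<Rightarrow> (nat \<Rightarrow> real) \<Rightarrow> real \<Rightarrow> real set \<Rightarrow> (real \<Rightarrow> real) \<Rightarrow>
   real set \<Rightarrow> (real \<Rightarrow> real) \<Rightarrow> ennreal" where
  "tp_posterior_mass f a b n x y q \<Delta> \<pi>\<delta> \<Gamma> \<pi>\<gamma> =
     (\<integral>\<^sup>+ \<beta>. (\<integral>\<^sup>+ \<sigma>\<in>{0<..}. (\<integral>\<^sup>+ \<delta>\<in>\<Delta>. (\<integral>\<^sup>+ \<gamma>\<in>\<Gamma>.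
        (\<Prod>j<n. tp_density f a b 0 \<sigma> \<delta> \<gamma> (y j - x j \<bullet> \<beta>)) *
        ennreal (\<pi>\<gamma> \<gamma>) * ennreal (\<pi>\<delta> \<delta>) * ennreal (\<sigma> powr (- q))
      \<partial>lborel) \<partial>lborel) \<partial>lborel) \<partial>lborel)"

definition sym_posterior_mass ::
  "(real \<Rightarrow> real \<Rightarrow> ennreal) \<Rightarrow> nat \<Rightarrow> (nat \<Rightarrow> real ^ 'p) \<Rightarrow> (nat \<Rightarrow> real) \<Rightarrow> real \<Rightarrow>
   real set \<Rightarrow> (real \<Rightarrow> real) \<Rightarrow> ennreal" where
  "sym_posterior_mass f n x y q \<Delta> \<pi>\<delta> =
     (\<integral>\<^sup>+ \<beta>. (\<integral>\<^sup>+ \<sigma>\<in>{0<..}. (\<integral>\<^sup>+ \<delta>\<in>\<Delta>.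
        (\<Prod>j<n. ennreal (1 / \<sigma>) * f ((y j - x j \<bullet> \<beta>) / \<sigma>) \<delta>) *
        ennreal (\<pi>\<delta> \<delta>) * ennreal (\<sigma> powr (- q))
      \<partial>lborel) \<partial>lborel) \<partial>lborel)"

end

theory Submission
  imports Defs
begin

text \<open>Since the SMN density f is symmetric and decreasing in |z|, the two-piece likelihood is
  squeezed between the likelihoods that use the single scale sigma min(a, b), respectively
  sigma max(a, b), on both sides of the mode. For a single scale sigma c(gamma) the substitution
  s = sigma c(gamma) factorises the posterior mass into 2^n times the integral of
  c^(n+q-1) / (a+b)^n against pi(gamma), times the mass of the symmetric model. Both factors of the
  lower bound are positive (f > 0 because H puts no mass on (-inf, 0]), so finiteness of the
  two-piece mass forces finiteness of each, and conversely for the upper bound.\<close>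

lemma measurable_compose_uncurry:
  assumes "(\<lambda>(z, w). F z w) \<in> borel_measurable (borel \<Otimes>\<^sub>M borel)"
    and [measurable]: "u \<in> borel_measurable M" "v \<in> borel_measurable M"
  shows "(\<lambda>t. F (u t) (v t)) \<in> borel_measurable M"
  using measurable_compose[OF measurable_Pair[of u M borel v borel] assms(1)] by simp

lemma nn_integral_pos_if_support:
  fixes f g :: "'a \<Rightarrow> ennreal"
  assumes "g \<in> borel_measurable M" "f \<in> borel_measurable M"
    and "(\<integral>\<^sup>+x. g x \<partial>M) \<noteq> 0" and "\<And>x. g x \<noteq> 0 \<Longrightarrow> f x \<noteq> 0"
  shows "(\<integral>\<^sup>+x. f x \<partial>M) > 0"
proof (rule ccontr)
  assume "\<not> (\<integral>\<^sup>+x. f x \<partial>M) > 0"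
  then have "AE x in M. f x = 0" using assms(2) by (simp add: nn_integral_0_iff_AE)
  then have "AE x in M. g x = 0" by (rule AE_mp) (use assms(4) in auto)
  with assms(1,3) show False by (simp add: nn_integral_0_iff_AE)
qed

lemma set_nn_integral_weighted_pos:
  fixes w \<pi> :: "real \<Rightarrow> real"
  assumes [measurable]: "w \<in> borel_measurable borel" "\<pi> \<in> borel_measurable borel" "A \<in> sets borel"
    and w_pos: "\<And>t. t \<in> A \<Longrightarrow> w t > 0" and \<pi>_mass: "(\<integral>\<^sup>+t\<in>A. ennreal (\<pi> t) \<partial>lborel) \<noteq> 0"
  shows "(\<integral>\<^sup>+t\<in>A. ennreal (w t * \<pi> t) \<partial>lborel) > 0"
proof (rule nn_integral_pos_if_support[where g = "\<lambda>t. ennreal (\<pi> t) * indicator A t"])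
  fix t assume "ennreal (\<pi> t) * indicator A t \<noteq> 0"
  then have "t \<in> A" and "\<pi> t > 0"
    by (auto simp: indicator_eq_0_iff ennreal_eq_0_iff)
  then show "ennreal (w t * \<pi> t) * indicator A t \<noteq> 0"
    using w_pos by (simp add: ennreal_eq_0_iff not_le)
qed (use \<pi>_mass in auto)

lemma ennreal_finite_iff_sandwich:
  fixes c I J S T :: ennreal
  assumes "c * I * S \<le> T" "T \<le> c * J * S" and "0 < c" "c < \<infinity>" "0 < I" "0 < S"
  shows "(T < \<infinity> \<longrightarrow> S < \<infinity> \<and> I < \<infinity>) \<and> (S < \<infinity> \<and> J < \<infinity> \<longrightarrow> T < \<infinity>)"
proof (rule conjI; rule impI)
  assume "T < \<infinity>"
  with assms(1) have "c * I * S < \<infinity>" by (rule le_less_trans)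
  with assms(3,5,6) show "S < \<infinity> \<and> I < \<infinity>" by (auto simp: ennreal_mult_less_top)
next
  assume "S < \<infinity> \<and> J < \<infinity>"
  with assms(4) have "c * J * S < \<infinity>" by (simp add: ennreal_mult_less_top)
  with assms(2) show "T < \<infinity>" by (rule le_less_trans)
qed

lemma nn_integral_lborel_innermost_to_front:
  fixes G :: "'a::euclidean_space \<Rightarrow> real \<Rightarrow> real \<Rightarrow> real \<Rightarrow> ennreal"
  assumes G: "(\<lambda>(\<beta>, \<sigma>, \<delta>, \<gamma>). G \<beta> \<sigma> \<delta> \<gamma>) \<in> borel_measurable (lborel \<Otimes>\<^sub>M lborel \<Otimes>\<^sub>M lborel \<Otimes>\<^sub>M lborel)"
  shows "(\<integral>\<^sup>+\<beta>. \<integral>\<^sup>+\<sigma>. \<integral>\<^sup>+\<delta>. \<integral>\<^sup>+\<gamma>. G \<beta> \<sigma> \<delta> \<gamma> \<partial>lborel \<partial>lborel \<partial>lborel \<partial>lborel)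
       = (\<integral>\<^sup>+\<gamma>. \<integral>\<^sup>+\<beta>. \<integral>\<^sup>+\<sigma>. \<integral>\<^sup>+\<delta>. G \<beta> \<sigma> \<delta> \<gamma> \<partial>lborel \<partial>lborel \<partial>lborel \<partial>lborel)"
proof -
  have G_\<delta>\<gamma>: "(\<lambda>(\<gamma>, \<delta>). G \<beta> \<sigma> \<delta> \<gamma>) \<in> borel_measurable (lborel \<Otimes>\<^sub>M lborel)" for \<beta> \<sigma>
  proof -
    have "(\<lambda>w::real \<times> real. (\<beta>, \<sigma>, snd w, fst w)) \<in> (lborel \<Otimes>\<^sub>M lborel) \<rightarrow>\<^sub>M (lborel \<Otimes>\<^sub>M lborel \<Otimes>\<^sub>M lborel \<Otimes>\<^sub>M lborel)"
      by measurable
    from measurable_compose[OF this G] show ?thesis by (simp add: case_prod_beta)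
  qed
  have G_\<sigma>\<gamma>: "(\<lambda>(\<gamma>, \<sigma>). \<integral>\<^sup>+\<delta>. G \<beta> \<sigma> \<delta> \<gamma> \<partial>lborel) \<in> borel_measurable (lborel \<Otimes>\<^sub>M lborel)" for \<beta>
  proof -
    have "(\<lambda>w::(real \<times> real) \<times> real. (\<beta>, snd (fst w), snd w, fst (fst w)))
        \<in> ((lborel \<Otimes>\<^sub>M lborel) \<Otimes>\<^sub>M lborel) \<rightarrow>\<^sub>M (lborel \<Otimes>\<^sub>M lborel \<Otimes>\<^sub>M lborel \<Otimes>\<^sub>M lborel)"
      by measurable
    from measurable_compose[OF this G]
    have "(\<lambda>(w, \<delta>). G \<beta> (snd w) \<delta> (fst w)) \<in> borel_measurable ((lborel \<Otimes>\<^sub>M lborel) \<Otimes>\<^sub>M lborel)"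
      by (simp add: case_prod_beta)
    from lborel.borel_measurable_nn_integral[OF this] show ?thesis by (simp add: case_prod_beta)
  qed
  have G_\<beta>\<gamma>: "(\<lambda>(\<gamma>, \<beta>). \<integral>\<^sup>+\<sigma>. \<integral>\<^sup>+\<delta>. G \<beta> \<sigma> \<delta> \<gamma> \<partial>lborel \<partial>lborel) \<in> borel_measurable (lborel \<Otimes>\<^sub>M lborel)"
  proof -
    have "(\<lambda>w::((real \<times> 'a) \<times> real) \<times> real. (snd (fst (fst w)), snd (fst w), snd w, fst (fst (fst w))))
        \<in> (((lborel \<Otimes>\<^sub>M lborel) \<Otimes>\<^sub>M lborel) \<Otimes>\<^sub>M lborel) \<rightarrow>\<^sub>M (lborel \<Otimes>\<^sub>M lborel \<Otimes>\<^sub>M lborel \<Otimes>\<^sub>M lborel)"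
      by measurable
    from measurable_compose[OF this G]
    have "(\<lambda>(v, \<delta>). G (snd (fst v)) (snd v) \<delta> (fst (fst v)))
        \<in> borel_measurable (((lborel \<Otimes>\<^sub>M lborel) \<Otimes>\<^sub>M lborel) \<Otimes>\<^sub>M lborel)"
      by (simp add: case_prod_beta)
    from lborel.borel_measurable_nn_integral[OF this]
    have "(\<lambda>(w, \<sigma>). \<integral>\<^sup>+\<delta>. G (snd w) \<sigma> \<delta> (fst w) \<partial>lborel) \<in> borel_measurable ((lborel \<Otimes>\<^sub>M lborel) \<Otimes>\<^sub>M lborel)"
      by (simp add: case_prod_beta)
    from lborel.borel_measurable_nn_integral[OF this] show ?thesis by (simp add: case_prod_beta)
  qed
  have "(\<integral>\<^sup>+\<beta>. \<integral>\<^sup>+\<sigma>. \<integral>\<^sup>+\<delta>. \<integral>\<^sup>+\<gamma>. G \<beta> \<sigma> \<delta> \<gamma> \<partial>lborel \<partial>lborel \<partial>lborel \<partial>lborel)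
      = (\<integral>\<^sup>+\<beta>. \<integral>\<^sup>+\<sigma>. \<integral>\<^sup>+\<gamma>. \<integral>\<^sup>+\<delta>. G \<beta> \<sigma> \<delta> \<gamma> \<partial>lborel \<partial>lborel \<partial>lborel \<partial>lborel)"
    using lborel_pair.Fubini'[OF G_\<delta>\<gamma>] by simp
  also have "\<dots> = (\<integral>\<^sup>+\<beta>. \<integral>\<^sup>+\<gamma>. \<integral>\<^sup>+\<sigma>. \<integral>\<^sup>+\<delta>. G \<beta> \<sigma> \<delta> \<gamma> \<partial>lborel \<partial>lborel \<partial>lborel \<partial>lborel)"
    using lborel_pair.Fubini'[OF G_\<sigma>\<gamma>] by simp
  also have "\<dots> = (\<integral>\<^sup>+\<gamma>. \<integral>\<^sup>+\<beta>. \<integral>\<^sup>+\<sigma>. \<integral>\<^sup>+\<delta>. G \<beta> \<sigma> \<delta> \<gamma> \<partial>lborel \<partial>lborel \<partial>lborel \<partial>lborel)"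
    using lborel_pair.Fubini'[OF G_\<beta>\<gamma>] by simp
  finally show ?thesis .
qed

lemma nn_integral_nested_set_eq_indicators:
  fixes P :: "'a::euclidean_space \<Rightarrow> real \<Rightarrow> real \<Rightarrow> real \<Rightarrow> ennreal"
  assumes P_meas: "\<And>\<beta> \<sigma> \<delta>. P \<beta> \<sigma> \<delta> \<in> borel_measurable borel"
    and P_int_meas: "\<And>\<beta> \<sigma>. (\<lambda>\<delta>. \<integral>\<^sup>+\<gamma>\<in>\<Gamma>. P \<beta> \<sigma> \<delta> \<gamma> \<partial>lborel) \<in> borel_measurable borel"
    and [measurable]: "\<Gamma> \<in> sets borel" "\<Delta> \<in> sets borel"
  shows "(\<integral>\<^sup>+\<beta>. (\<integral>\<^sup>+\<sigma>\<in>{0<..}. (\<integral>\<^sup>+\<delta>\<in>\<Delta>. (\<integral>\<^sup>+\<gamma>\<in>\<Gamma>. P \<beta> \<sigma> \<delta> \<gamma> \<partial>lborel) \<partial>lborel) \<partial>lborel) \<partial>lborel)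
    = (\<integral>\<^sup>+\<beta>. \<integral>\<^sup>+\<sigma>. \<integral>\<^sup>+\<delta>. \<integral>\<^sup>+\<gamma>. P \<beta> \<sigma> \<delta> \<gamma> * indicator {0<..} \<sigma> * indicator \<Delta> \<delta> * indicator \<Gamma> \<gamma>
        \<partial>lborel \<partial>lborel \<partial>lborel \<partial>lborel)"
proof (rule nn_integral_cong)
  fix \<beta> :: 'a
  have inner: "(\<integral>\<^sup>+\<gamma>\<in>\<Gamma>. P \<beta> \<sigma> \<delta> \<gamma> \<partial>lborel) * (indicator \<Delta> \<delta> * indicator {0<..} \<sigma>)
      = (\<integral>\<^sup>+\<gamma>. P \<beta> \<sigma> \<delta> \<gamma> * indicator {0<..} \<sigma> * indicator \<Delta> \<delta> * indicator \<Gamma> \<gamma> \<partial>lborel)" for \<sigma> \<delta>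
    by (subst nn_integral_multc[symmetric])
      (auto intro!: nn_integral_cong borel_measurable_times_ennreal P_meas simp: ac_simps)
  have middle: "(\<integral>\<^sup>+\<delta>\<in>\<Delta>. (\<integral>\<^sup>+\<gamma>\<in>\<Gamma>. P \<beta> \<sigma> \<delta> \<gamma> \<partial>lborel) \<partial>lborel) * indicator {0<..} \<sigma>
      = (\<integral>\<^sup>+\<delta>. (\<integral>\<^sup>+\<gamma>\<in>\<Gamma>. P \<beta> \<sigma> \<delta> \<gamma> \<partial>lborel) * (indicator \<Delta> \<delta> * indicator {0<..} \<sigma>) \<partial>lborel)" for \<sigma>
    by (subst nn_integral_multc[symmetric])
      (auto intro!: borel_measurable_times_ennreal P_int_meas simp: mult.assoc)
  show "(\<integral>\<^sup>+\<sigma>\<in>{0<..}. (\<integral>\<^sup>+\<delta>\<in>\<Delta>. (\<integral>\<^sup>+\<gamma>\<in>\<Gamma>. P \<beta> \<sigma> \<delta> \<gamma> \<partial>lborel) \<partial>lborel) \<partial>lborel)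
    = (\<integral>\<^sup>+\<sigma>. \<integral>\<^sup>+\<delta>. \<integral>\<^sup>+\<gamma>. P \<beta> \<sigma> \<delta> \<gamma> * indicator {0<..} \<sigma> * indicator \<Delta> \<delta> * indicator \<Gamma> \<gamma>
        \<partial>lborel \<partial>lborel \<partial>lborel)"
    unfolding middle inner ..
qed

lemma nn_integral_nested_set_mono:
  fixes P Q :: "'a::euclidean_space \<Rightarrow> real \<Rightarrow> real \<Rightarrow> real \<Rightarrow> ennreal"
  assumes "\<And>\<beta> \<sigma> \<delta> \<gamma>. \<sigma> > 0 \<Longrightarrow> \<delta> \<in> \<Delta> \<Longrightarrow> \<gamma> \<in> \<Gamma> \<Longrightarrow> P \<beta> \<sigma> \<delta> \<gamma> \<le> Q \<beta> \<sigma> \<delta> \<gamma>"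
  shows "(\<integral>\<^sup>+\<beta>. (\<integral>\<^sup>+\<sigma>\<in>{0<..}. (\<integral>\<^sup>+\<delta>\<in>\<Delta>. (\<integral>\<^sup>+\<gamma>\<in>\<Gamma>. P \<beta> \<sigma> \<delta> \<gamma> \<partial>lborel) \<partial>lborel) \<partial>lborel) \<partial>lborel)
       \<le> (\<integral>\<^sup>+\<beta>. (\<integral>\<^sup>+\<sigma>\<in>{0<..}. (\<integral>\<^sup>+\<delta>\<in>\<Delta>. (\<integral>\<^sup>+\<gamma>\<in>\<Gamma>. Q \<beta> \<sigma> \<delta> \<gamma> \<partial>lborel) \<partial>lborel) \<partial>lborel) \<partial>lborel)"
  using assms by (auto intro!: nn_integral_mono simp: indicator_def)

subsection \<open>Factorising the mass for a single scale\<close>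

lemma nn_integral_pos_half_line_rescale:
  fixes Q :: "real \<Rightarrow> ennreal"
  assumes [measurable]: "Q \<in> borel_measurable borel" and k: "k > 0"
  shows "(\<integral>\<^sup>+\<sigma>\<in>{0<..}. Q (\<sigma> * k) \<partial>lborel) = ennreal (1 / k) * (\<integral>\<^sup>+s\<in>{0<..}. Q s \<partial>lborel)"
proof -
  have shift: "Q (0 + k * \<sigma>) * indicator {0<..} (0 + k * \<sigma>) = Q (\<sigma> * k) * indicator {0<..} \<sigma>" for \<sigma>
    using k by (simp add: mult.commute[of k] indicator_def zero_less_mult_iff)
  have "(\<integral>\<^sup>+s\<in>{0<..}. Q s \<partial>lborel) = ennreal k * (\<integral>\<^sup>+\<sigma>\<in>{0<..}. Q (\<sigma> * k) \<partial>lborel)"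
    using nn_integral_real_affine[of "\<lambda>s. Q s * indicator {0<..} s" k 0] k by (simp only: shift) simp
  moreover have "ennreal (1 / k) * ennreal k = 1"
    using k by (simp flip: ennreal_mult)
  ultimately show ?thesis
    by (simp add: mult.assoc[symmetric])
qed

lemma envelope_integrand_rescale:
  fixes F :: "real \<Rightarrow> real \<Rightarrow> ennreal" and z :: "nat \<Rightarrow> real"
  assumes k: "k > 0" and A: "A > 0" and \<sigma>: "\<sigma> > 0" and pg: "pg \<ge> 0"
  shows "(\<Prod>j<n. ennreal (2 / (\<sigma> * A)) * F (z j / (\<sigma> * k)) \<delta>) * ennreal pg * pd * ennreal (\<sigma> powr -q)
    = ennreal ((2 * k / A) ^ n * k powr q * pg)
      * ((\<Prod>j<n. ennreal (1 / (\<sigma> * k)) * F (z j / (\<sigma> * k)) \<delta>) * pd * ennreal ((\<sigma> * k) powr -q))"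
proof -
  have scale: "ennreal (2 / (\<sigma> * A)) = ennreal (2 * k / A) * ennreal (1 / (\<sigma> * k))"
    using k A \<sigma> by (subst ennreal_mult[symmetric]) (auto simp: field_simps)
  have prior: "ennreal (\<sigma> powr -q) = ennreal (k powr q) * ennreal ((\<sigma> * k) powr -q)"
    using k \<sigma> by (subst ennreal_mult[symmetric]) (auto simp: powr_mult powr_minus field_simps)
  have const: "ennreal ((2 * k / A) ^ n * k powr q * pg) = ennreal (2 * k / A) ^ n * ennreal (k powr q) * ennreal pg"
    using k A pg by (simp add: ennreal_mult ennreal_power)
  show ?thesis
    unfolding scale prior const by (simp add: prod.distrib ac_simps)
qed

lemma rescaled_constant_eq:
  fixes k A pg :: real
  assumes k: "k > 0" and A: "A > 0" and pg: "pg \<ge> 0"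
  shows "ennreal ((2 * k / A) ^ n * k powr q * pg / k) = 2 ^ n * ennreal (k powr (real n + q - 1) / A ^ n * pg)"
proof -
  have "k powr (real n + q - 1) = k ^ n * k powr q / k"
    using k by (simp add: powr_diff powr_add powr_realpow)
  then have "(2 * k / A) ^ n * k powr q * pg / k = 2 ^ n * (k powr (real n + q - 1) / A ^ n * pg)"
    using k A by (simp add: power_divide power_mult_distrib field_simps)
  moreover have "ennreal (2 ^ n * r) = 2 ^ n * ennreal r" for r :: real
    using ennreal_power[of 2 n] by (simp add: ennreal_mult')
  ultimately show ?thesis
    by (simp only:)
qed

lemma common_scale_mass_eq:
  fixes F :: "real \<Rightarrow> real \<Rightarrow> ennreal" and x :: "nat \<Rightarrow> real ^ 'p" and y :: "nat \<Rightarrow> real"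
  assumes F: "(\<lambda>(z, \<delta>). F z \<delta>) \<in> borel_measurable (borel \<Otimes>\<^sub>M borel)"
    and [measurable]: "pd \<in> borel_measurable borel" "\<Delta> \<in> sets borel"
    and k: "k > 0" and A: "A > 0" and pg: "pg \<ge> 0"
  shows "(\<integral>\<^sup>+\<beta>. \<integral>\<^sup>+\<sigma>. \<integral>\<^sup>+\<delta>.
      (\<Prod>j<n. ennreal (2 / (\<sigma> * A)) * F ((y j - x j \<bullet> \<beta>) / (\<sigma> * k)) \<delta>) * ennreal pg
        * ennreal (pd \<delta>) * ennreal (\<sigma> powr -q) * indicator {0<..} \<sigma> * indicator \<Delta> \<delta>
      \<partial>lborel \<partial>lborel \<partial>lborel)
    = 2 ^ n * ennreal (k powr (real n + q - 1) / A ^ n * pg) * sym_posterior_mass F n x y q \<Delta> pd"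
proof -
  note [measurable] = measurable_compose_uncurry[OF F]
  let ?S = "\<lambda>\<beta> s \<delta>. (\<Prod>j<n. ennreal (1 / s) * F ((y j - x j \<bullet> \<beta>) / s) \<delta>)
      * ennreal (pd \<delta>) * ennreal (s powr -q) * indicator \<Delta> \<delta>"
  let ?K = "(2 * k / A) ^ n * k powr q * pg"
  have inner: "(\<integral>\<^sup>+\<delta>. (\<Prod>j<n. ennreal (2 / (\<sigma> * A)) * F ((y j - x j \<bullet> \<beta>) / (\<sigma> * k)) \<delta>) * ennreal pg
        * ennreal (pd \<delta>) * ennreal (\<sigma> powr -q) * indicator {0<..} \<sigma> * indicator \<Delta> \<delta> \<partial>lborel)
      = ennreal ?K * ((\<integral>\<^sup>+\<delta>. ?S \<beta> (\<sigma> * k) \<delta> \<partial>lborel) * indicator {0<..} \<sigma>)" for \<beta> \<sigma>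
  proof (cases "\<sigma> > 0")
    case True
    have "(\<integral>\<^sup>+\<delta>. (\<Prod>j<n. ennreal (2 / (\<sigma> * A)) * F ((y j - x j \<bullet> \<beta>) / (\<sigma> * k)) \<delta>) * ennreal pg
        * ennreal (pd \<delta>) * ennreal (\<sigma> powr -q) * indicator {0<..} \<sigma> * indicator \<Delta> \<delta> \<partial>lborel)
      = (\<integral>\<^sup>+\<delta>. ennreal ?K * ?S \<beta> (\<sigma> * k) \<delta> \<partial>lborel)"
      using envelope_integrand_rescale[OF k A True pg, where z = "\<lambda>j. y j - x j \<bullet> \<beta>" and n = n and F = F] True
      by (simp add: mult.assoc)
    also have "\<dots> = ennreal ?K * (\<integral>\<^sup>+\<delta>. ?S \<beta> (\<sigma> * k) \<delta> \<partial>lborel)"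
      by (rule nn_integral_cmult) measurable
    finally show ?thesis
      using True by simp
  qed simp
  have rescale: "(\<integral>\<^sup>+\<sigma>\<in>{0<..}. (\<integral>\<^sup>+\<delta>. ?S \<beta> (\<sigma> * k) \<delta> \<partial>lborel) \<partial>lborel)
      = ennreal (1 / k) * (\<integral>\<^sup>+s\<in>{0<..}. (\<integral>\<^sup>+\<delta>. ?S \<beta> s \<delta> \<partial>lborel) \<partial>lborel)" for \<beta>
    by (rule nn_integral_pos_half_line_rescale[OF _ k]) measurable
  have "(\<integral>\<^sup>+\<beta>. \<integral>\<^sup>+\<sigma>. \<integral>\<^sup>+\<delta>.
      (\<Prod>j<n. ennreal (2 / (\<sigma> * A)) * F ((y j - x j \<bullet> \<beta>) / (\<sigma> * k)) \<delta>) * ennreal pg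
        * ennreal (pd \<delta>) * ennreal (\<sigma> powr -q) * indicator {0<..} \<sigma> * indicator \<Delta> \<delta>
      \<partial>lborel \<partial>lborel \<partial>lborel)
      = (\<integral>\<^sup>+\<beta>. ennreal ?K * (\<integral>\<^sup>+\<sigma>\<in>{0<..}. (\<integral>\<^sup>+\<delta>. ?S \<beta> (\<sigma> * k) \<delta> \<partial>lborel) \<partial>lborel) \<partial>lborel)"
    unfolding inner by (intro nn_integral_cong nn_integral_cmult) measurable
  also have "\<dots> = (\<integral>\<^sup>+\<beta>. ennreal ?K * (ennreal (1 / k)
      * (\<integral>\<^sup>+s\<in>{0<..}. (\<integral>\<^sup>+\<delta>. ?S \<beta> s \<delta> \<partial>lborel) \<partial>lborel)) \<partial>lborel)"
    by (simp only: rescale)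
  also have "\<dots> = (\<integral>\<^sup>+\<beta>. ennreal (?K / k) * (\<integral>\<^sup>+s\<in>{0<..}. (\<integral>\<^sup>+\<delta>. ?S \<beta> s \<delta> \<partial>lborel) \<partial>lborel) \<partial>lborel)"
    using k A pg by (simp add: mult.assoc[symmetric] ennreal_mult[symmetric])
  also have "\<dots> = ennreal (?K / k) * sym_posterior_mass F n x y q \<Delta> pd"
    unfolding sym_posterior_mass_def by (rule nn_integral_cmult) measurable
  finally show ?thesis
    by (simp only: rescaled_constant_eq[OF k A pg])
qed

text \<open>The two-piece mass with both half-scales replaced by the single scale c(gamma); for
  c = min(a, b) and c = max(a, b) it bounds the two-piece mass from below and above.\<close>

definition tp_envelope_mass ::
  "(real \<Rightarrow> real \<Rightarrow> ennreal) \<Rightarrow> (real \<Rightarrow> real) \<Rightarrow> (real \<Rightarrow> real) \<Rightarrow> (real \<Rightarrow> real) \<Rightarrow> nat \<Rightarrow>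
   (nat \<Rightarrow> real ^ 'p) \<Rightarrow> (nat \<Rightarrow> real) \<Rightarrow> real \<Rightarrow> real set \<Rightarrow> (real \<Rightarrow> real) \<Rightarrow>
   real set \<Rightarrow> (real \<Rightarrow> real) \<Rightarrow> ennreal" where
  "tp_envelope_mass f a b c n x y q \<Delta> \<pi>\<delta> \<Gamma> \<pi>\<gamma> =
     (\<integral>\<^sup>+ \<beta>. (\<integral>\<^sup>+ \<sigma>\<in>{0<..}. (\<integral>\<^sup>+ \<delta>\<in>\<Delta>. (\<integral>\<^sup>+ \<gamma>\<in>\<Gamma>.
        (\<Prod>j<n. ennreal (2 / (\<sigma> * (a \<gamma> + b \<gamma>))) * f ((y j - x j \<bullet> \<beta>) / (\<sigma> * c \<gamma>)) \<delta>) *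
        ennreal (\<pi>\<gamma> \<gamma>) * ennreal (\<pi>\<delta> \<delta>) * ennreal (\<sigma> powr (- q))
      \<partial>lborel) \<partial>lborel) \<partial>lborel) \<partial>lborel)"

lemma tp_envelope_mass_eq:
  fixes F :: "real \<Rightarrow> real \<Rightarrow> ennreal" and x :: "nat \<Rightarrow> real ^ 'p" and y :: "nat \<Rightarrow> real"
  assumes F: "(\<lambda>(z, \<delta>). F z \<delta>) \<in> borel_measurable (borel \<Otimes>\<^sub>M borel)"
    and [measurable]: "a \<in> borel_measurable borel" "b \<in> borel_measurable borel" "c \<in> borel_measurable borel"
      "\<pi>\<gamma> \<in> borel_measurable borel" "\<pi>\<delta> \<in> borel_measurable borel" "\<Gamma> \<in> sets borel" "\<Delta> \<in> sets borel"
    and a_pos: "\<And>\<gamma>. \<gamma> \<in> \<Gamma> \<Longrightarrow> a \<gamma> > 0" and b_pos: "\<And>\<gamma>. \<gamma> \<in> \<Gamma> \<Longrightarrow> b \<gamma> > 0"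
    and c_pos: "\<And>\<gamma>. \<gamma> \<in> \<Gamma> \<Longrightarrow> c \<gamma> > 0" and \<pi>\<gamma>_nonneg: "\<And>\<gamma>. \<pi>\<gamma> \<gamma> \<ge> 0"
  shows "tp_envelope_mass F a b c n x y q \<Delta> \<pi>\<delta> \<Gamma> \<pi>\<gamma>
    = 2 ^ n * (\<integral>\<^sup>+\<gamma>\<in>\<Gamma>. ennreal (c \<gamma> powr (real n + q - 1) / (a \<gamma> + b \<gamma>) ^ n * \<pi>\<gamma> \<gamma>) \<partial>lborel)
      * sym_posterior_mass F n x y q \<Delta> \<pi>\<delta>"
proof -
  note [measurable] = measurable_compose_uncurry[OF F]
  have "tp_envelope_mass F a b c n x y q \<Delta> \<pi>\<delta> \<Gamma> \<pi>\<gamma>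
    = (\<integral>\<^sup>+\<gamma>. \<integral>\<^sup>+\<beta>. \<integral>\<^sup>+\<sigma>. \<integral>\<^sup>+\<delta>.
        (\<Prod>j<n. ennreal (2 / (\<sigma> * (a \<gamma> + b \<gamma>))) * F ((y j - x j \<bullet> \<beta>) / (\<sigma> * c \<gamma>)) \<delta>) * ennreal (\<pi>\<gamma> \<gamma>)
          * ennreal (\<pi>\<delta> \<delta>) * ennreal (\<sigma> powr -q) * indicator {0<..} \<sigma> * indicator \<Delta> \<delta> * indicator \<Gamma> \<gamma>
        \<partial>lborel \<partial>lborel \<partial>lborel \<partial>lborel)"
    unfolding tp_envelope_mass_def
    by (subst nn_integral_nested_set_eq_indicators, measurable)
      (rule nn_integral_lborel_innermost_to_front, measurable)
  also have "\<dots> = (\<integral>\<^sup>+\<gamma>. 2 ^ n * (ennreal (c \<gamma> powr (real n + q - 1) / (a \<gamma> + b \<gamma>) ^ n * \<pi>\<gamma> \<gamma>)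
      * indicator \<Gamma> \<gamma>) * sym_posterior_mass F n x y q \<Delta> \<pi>\<delta> \<partial>lborel)"
  proof (rule nn_integral_cong)
    fix \<gamma>
    show "(\<integral>\<^sup>+\<beta>. \<integral>\<^sup>+\<sigma>. \<integral>\<^sup>+\<delta>.
        (\<Prod>j<n. ennreal (2 / (\<sigma> * (a \<gamma> + b \<gamma>))) * F ((y j - x j \<bullet> \<beta>) / (\<sigma> * c \<gamma>)) \<delta>) * ennreal (\<pi>\<gamma> \<gamma>)
          * ennreal (\<pi>\<delta> \<delta>) * ennreal (\<sigma> powr -q) * indicator {0<..} \<sigma> * indicator \<Delta> \<delta> * indicator \<Gamma> \<gamma>
        \<partial>lborel \<partial>lborel \<partial>lborel)
      = 2 ^ n * (ennreal (c \<gamma> powr (real n + q - 1) / (a \<gamma> + b \<gamma>) ^ n * \<pi>\<gamma> \<gamma>) * indicator \<Gamma> \<gamma>)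
        * sym_posterior_mass F n x y q \<Delta> \<pi>\<delta>"
    proof (cases "\<gamma> \<in> \<Gamma>")
      case True
      have "a \<gamma> + b \<gamma> > 0"
        using a_pos[OF True] b_pos[OF True] by simp
      from common_scale_mass_eq[OF F assms(6,8) c_pos[OF True] this \<pi>\<gamma>_nonneg, where n = n and x = x and y = y and q = q] True
      show ?thesis by (simp add: mult.assoc)
    qed simp
  qed
  also have "\<dots> = (\<integral>\<^sup>+\<gamma>. 2 ^ n * (ennreal (c \<gamma> powr (real n + q - 1) / (a \<gamma> + b \<gamma>) ^ n * \<pi>\<gamma> \<gamma>)
      * indicator \<Gamma> \<gamma>) \<partial>lborel) * sym_posterior_mass F n x y q \<Delta> \<pi>\<delta>"
    by (rule nn_integral_multc) measurable
  also have "(\<integral>\<^sup>+\<gamma>. 2 ^ n * (ennreal (c \<gamma> powr (real n + q - 1) / (a \<gamma> + b \<gamma>) ^ n * \<pi>\<gamma> \<gamma>)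
      * indicator \<Gamma> \<gamma>) \<partial>lborel)
    = 2 ^ n * (\<integral>\<^sup>+\<gamma>\<in>\<Gamma>. ennreal (c \<gamma> powr (real n + q - 1) / (a \<gamma> + b \<gamma>) ^ n * \<pi>\<gamma> \<gamma>) \<partial>lborel)"
    by (rule nn_integral_cmult) measurable
  finally show ?thesis .
qed

subsection \<open>Squeezing the two-piece likelihood\<close>

lemma abs_divide_antimono: "0 < m \<Longrightarrow> m \<le> c \<Longrightarrow> \<bar>z / c\<bar> \<le> \<bar>z / (m::real)\<bar>"
  by (simp add: abs_divide frac_le)

lemma tp_density_ge_min_scale:
  assumes F_mono: "\<And>u v. \<bar>u\<bar> \<le> \<bar>v\<bar> \<Longrightarrow> F v \<delta> \<le> F u \<delta>"
    and "\<sigma> > 0" "a \<gamma> > 0" "b \<gamma> > 0"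
  shows "ennreal (2 / (\<sigma> * (a \<gamma> + b \<gamma>))) * F (z / (\<sigma> * min (a \<gamma>) (b \<gamma>))) \<delta> \<le> tp_density F a b 0 \<sigma> \<delta> \<gamma> z"
  using assms unfolding tp_density_def
  by (auto intro!: mult_left_mono F_mono abs_divide_antimono simp: min_def)

lemma tp_density_le_max_scale:
  assumes F_mono: "\<And>u v. \<bar>u\<bar> \<le> \<bar>v\<bar> \<Longrightarrow> F v \<delta> \<le> F u \<delta>"
    and "\<sigma> > 0" "a \<gamma> > 0" "b \<gamma> > 0"
  shows "tp_density F a b 0 \<sigma> \<delta> \<gamma> z \<le> ennreal (2 / (\<sigma> * (a \<gamma> + b \<gamma>))) * F (z / (\<sigma> * max (a \<gamma>) (b \<gamma>))) \<delta>"
  using assms unfolding tp_density_def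
  by (auto intro!: mult_left_mono F_mono abs_divide_antimono simp: max_def)

lemma tp_envelope_mass_min_le:
  assumes F_mono: "\<And>u v \<delta>. \<bar>u\<bar> \<le> \<bar>v\<bar> \<Longrightarrow> F v \<delta> \<le> F u \<delta>"
    and a_pos: "\<And>\<gamma>. \<gamma> \<in> \<Gamma> \<Longrightarrow> a \<gamma> > 0" and b_pos: "\<And>\<gamma>. \<gamma> \<in> \<Gamma> \<Longrightarrow> b \<gamma> > 0"
  shows "tp_envelope_mass F a b (\<lambda>\<gamma>. min (a \<gamma>) (b \<gamma>)) n x y q \<Delta> \<pi>\<delta> \<Gamma> \<pi>\<gamma>
    \<le> tp_posterior_mass F a b n x y q \<Delta> \<pi>\<delta> \<Gamma> \<pi>\<gamma>"
  unfolding tp_envelope_mass_def tp_posterior_mass_def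
  by (intro nn_integral_nested_set_mono mult_right_mono prod_mono_ennreal tp_density_ge_min_scale
      F_mono a_pos b_pos) auto

lemma tp_posterior_mass_le_envelope_max:
  assumes F_mono: "\<And>u v \<delta>. \<bar>u\<bar> \<le> \<bar>v\<bar> \<Longrightarrow> F v \<delta> \<le> F u \<delta>"
    and a_pos: "\<And>\<gamma>. \<gamma> \<in> \<Gamma> \<Longrightarrow> a \<gamma> > 0" and b_pos: "\<And>\<gamma>. \<gamma> \<in> \<Gamma> \<Longrightarrow> b \<gamma> > 0"
  shows "tp_posterior_mass F a b n x y q \<Delta> \<pi>\<delta> \<Gamma> \<pi>\<gamma>
    \<le> tp_envelope_mass F a b (\<lambda>\<gamma>. max (a \<gamma>) (b \<gamma>)) n x y q \<Delta> \<pi>\<delta> \<Gamma> \<pi>\<gamma>"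
  unfolding tp_envelope_mass_def tp_posterior_mass_def
  by (intro nn_integral_nested_set_mono mult_right_mono prod_mono_ennreal tp_density_le_max_scale
      F_mono a_pos b_pos) auto

lemma tp_posterior_mass_lower_bound:
  fixes F :: "real \<Rightarrow> real \<Rightarrow> ennreal" and x :: "nat \<Rightarrow> real ^ 'p" and y :: "nat \<Rightarrow> real"
  assumes F: "(\<lambda>(z, \<delta>). F z \<delta>) \<in> borel_measurable (borel \<Otimes>\<^sub>M borel)"
    and F_mono: "\<And>u v \<delta>. \<bar>u\<bar> \<le> \<bar>v\<bar> \<Longrightarrow> F v \<delta> \<le> F u \<delta>"
    and [measurable]: "a \<in> borel_measurable borel" "b \<in> borel_measurable borel"
      "\<pi>\<gamma> \<in> borel_measurable borel" "\<pi>\<delta> \<in> borel_measurable borel" "\<Gamma> \<in> sets borel" "\<Delta> \<in> sets borel"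
    and a_pos: "\<And>\<gamma>. \<gamma> \<in> \<Gamma> \<Longrightarrow> a \<gamma> > 0" and b_pos: "\<And>\<gamma>. \<gamma> \<in> \<Gamma> \<Longrightarrow> b \<gamma> > 0"
    and \<pi>\<gamma>_nonneg: "\<And>\<gamma>. \<pi>\<gamma> \<gamma> \<ge> 0"
  shows "2 ^ n * (\<integral>\<^sup>+\<gamma>\<in>\<Gamma>. ennreal (min (a \<gamma>) (b \<gamma>) powr (real n + q - 1) / (a \<gamma> + b \<gamma>) ^ n * \<pi>\<gamma> \<gamma>) \<partial>lborel)
      * sym_posterior_mass F n x y q \<Delta> \<pi>\<delta>
    \<le> tp_posterior_mass F a b n x y q \<Delta> \<pi>\<delta> \<Gamma> \<pi>\<gamma>"
proof -
  have "2 ^ n * (\<integral>\<^sup>+\<gamma>\<in>\<Gamma>. ennreal (min (a \<gamma>) (b \<gamma>) powr (real n + q - 1) / (a \<gamma> + b \<gamma>) ^ n * \<pi>\<gamma> \<gamma>) \<partial>lborel)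
      * sym_posterior_mass F n x y q \<Delta> \<pi>\<delta>
    = tp_envelope_mass F a b (\<lambda>\<gamma>. min (a \<gamma>) (b \<gamma>)) n x y q \<Delta> \<pi>\<delta> \<Gamma> \<pi>\<gamma>"
    by (rule tp_envelope_mass_eq[symmetric]) (use assms in \<open>measurable, auto\<close>)
  also have "\<dots> \<le> tp_posterior_mass F a b n x y q \<Delta> \<pi>\<delta> \<Gamma> \<pi>\<gamma>"
    by (rule tp_envelope_mass_min_le) (use F_mono a_pos b_pos in auto)
  finally show ?thesis .
qed

lemma tp_posterior_mass_upper_bound:
  fixes F :: "real \<Rightarrow> real \<Rightarrow> ennreal" and x :: "nat \<Rightarrow> real ^ 'p" and y :: "nat \<Rightarrow> real"
  assumes F: "(\<lambda>(z, \<delta>). F z \<delta>) \<in> borel_measurable (borel \<Otimes>\<^sub>M borel)"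
    and F_mono: "\<And>u v \<delta>. \<bar>u\<bar> \<le> \<bar>v\<bar> \<Longrightarrow> F v \<delta> \<le> F u \<delta>"
    and [measurable]: "a \<in> borel_measurable borel" "b \<in> borel_measurable borel"
      "\<pi>\<gamma> \<in> borel_measurable borel" "\<pi>\<delta> \<in> borel_measurable borel" "\<Gamma> \<in> sets borel" "\<Delta> \<in> sets borel"
    and a_pos: "\<And>\<gamma>. \<gamma> \<in> \<Gamma> \<Longrightarrow> a \<gamma> > 0" and b_pos: "\<And>\<gamma>. \<gamma> \<in> \<Gamma> \<Longrightarrow> b \<gamma> > 0"
    and \<pi>\<gamma>_nonneg: "\<And>\<gamma>. \<pi>\<gamma> \<gamma> \<ge> 0"
  shows "tp_posterior_mass F a b n x y q \<Delta> \<pi>\<delta> \<Gamma> \<pi>\<gamma>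
    \<le> 2 ^ n * (\<integral>\<^sup>+\<gamma>\<in>\<Gamma>. ennreal (max (a \<gamma>) (b \<gamma>) powr (real n + q - 1) / (a \<gamma> + b \<gamma>) ^ n * \<pi>\<gamma> \<gamma>) \<partial>lborel)
      * sym_posterior_mass F n x y q \<Delta> \<pi>\<delta>"
proof -
  have "tp_posterior_mass F a b n x y q \<Delta> \<pi>\<delta> \<Gamma> \<pi>\<gamma>
    \<le> tp_envelope_mass F a b (\<lambda>\<gamma>. max (a \<gamma>) (b \<gamma>)) n x y q \<Delta> \<pi>\<delta> \<Gamma> \<pi>\<gamma>"
    by (rule tp_posterior_mass_le_envelope_max) (use F_mono a_pos b_pos in auto)
  also have "\<dots> = 2 ^ n * (\<integral>\<^sup>+\<gamma>\<in>\<Gamma>. ennreal (max (a \<gamma>) (b \<gamma>) powr (real n + q - 1) / (a \<gamma> + b \<gamma>) ^ n * \<pi>\<gamma> \<gamma>) \<partial>lborel)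
      * sym_posterior_mass F n x y q \<Delta> \<pi>\<delta>"
    by (rule tp_envelope_mass_eq) (use assms in \<open>measurable, auto simp: less_max_iff_disj\<close>)
  finally show ?thesis .
qed

subsection \<open>Scale mixtures of normals\<close>

lemma smn_density_measurable:
  assumes "H \<in> borel \<rightarrow>\<^sub>M prob_algebra borel"
  shows "(\<lambda>(z, \<delta>). smn_density H z \<delta>) \<in> borel_measurable (borel \<Otimes>\<^sub>M borel)"
proof -
  have "(\<lambda>w. H (snd w)) \<in> (borel \<Otimes>\<^sub>M borel) \<rightarrow>\<^sub>M subprob_algebra borel"
    using measurable_prob_algebraD[OF assms] by measurable
  then have "(\<lambda>w. \<integral>\<^sup>+\<tau>. ennreal (sqrt \<tau> * std_normal_density (sqrt \<tau> * fst w)) \<partial>H (snd w))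
      \<in> borel_measurable (borel \<Otimes>\<^sub>M borel)"
    by (rule nn_integral_measurable_subprob_algebra2[rotated]) measurable
  then show ?thesis
    by (simp add: smn_density_def case_prod_beta)
qed

lemma smn_density_antimono_abs:
  assumes "\<bar>u\<bar> \<le> \<bar>v\<bar>"
  shows "smn_density H v \<delta> \<le> smn_density H u \<delta>"
  unfolding smn_density_def
proof (rule nn_integral_mono)
  fix \<tau> :: real
  show "ennreal (sqrt \<tau> * std_normal_density (sqrt \<tau> * v)) \<le> ennreal (sqrt \<tau> * std_normal_density (sqrt \<tau> * u))"
  proof (cases "\<tau> > 0")
    case False
    then have "sqrt \<tau> * std_normal_density (sqrt \<tau> * v) \<le> 0"
      by (intro mult_nonpos_nonneg) (auto simp: normal_density_nonneg)
    then show ?thesis by (simp add: ennreal_neg)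
  next
    case True
    have "(sqrt \<tau> * u)\<^sup>2 \<le> (sqrt \<tau> * v)\<^sup>2"
      using assms True by (simp add: power_mult_distrib abs_le_square_iff)
    then have "std_normal_density (sqrt \<tau> * v) \<le> std_normal_density (sqrt \<tau> * u)"
      by (simp add: normal_density_def divide_right_mono)
    then show ?thesis
      using True by (intro ennreal_leI mult_left_mono) auto
  qed
qed

lemma smn_density_pos:
  assumes H: "H \<in> borel \<rightarrow>\<^sub>M prob_algebra borel" and H_pos: "emeasure (H \<delta>) {..0} = 0"
  shows "smn_density H z \<delta> > 0"
proof (rule ccontr)
  assume "\<not> smn_density H z \<delta> > 0"
  then have zero: "smn_density H z \<delta> = 0" by (simp add: not_gr_zero)
  have "H \<delta> \<in> space (prob_algebra borel)"
    using measurable_space[OF H] by simp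
  then have prob: "prob_space (H \<delta>)" and sets_H: "sets (H \<delta>) = sets borel"
    by (auto simp: space_prob_algebra)
  have "(\<lambda>\<tau>. ennreal (sqrt \<tau> * std_normal_density (sqrt \<tau> * z))) \<in> borel_measurable (H \<delta>)"
    unfolding measurable_cong_sets[OF sets_H refl] normal_density_def by measurable
  then have "AE \<tau> in H \<delta>. sqrt \<tau> * std_normal_density (sqrt \<tau> * z) \<le> 0"
    using zero unfolding smn_density_def by (simp add: nn_integral_0_iff_AE ennreal_eq_0_iff)
  moreover have "AE \<tau> in H \<delta>. \<tau> \<notin> {..0}"
    using H_pos sets_H by (intro AE_not_in) (auto simp: null_sets_def)
  ultimately have "AE \<tau> in H \<delta>. False"
  proof eventually_elim
    fix \<tau> :: real
    assume "sqrt \<tau> * std_normal_density (sqrt \<tau> * z) \<le> 0" and "\<tau> \<notin> {..0}"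
    moreover have "std_normal_density (sqrt \<tau> * z) > 0"
      by (simp add: normal_density_pos)
    ultimately show False
      by (simp add: mult_le_0_iff)
  qed
  then show False
    using prob_space.AE_False[OF prob] by simp
qed

lemma sym_posterior_mass_pos:
  fixes F :: "real \<Rightarrow> real \<Rightarrow> ennreal" and x :: "nat \<Rightarrow> real ^ 'p"
  assumes F: "(\<lambda>(z, \<delta>). F z \<delta>) \<in> borel_measurable (borel \<Otimes>\<^sub>M borel)"
    and F_pos: "\<And>z \<delta>. \<delta> \<in> \<Delta> \<Longrightarrow> F z \<delta> > 0"
    and [measurable]: "\<pi>\<delta> \<in> borel_measurable borel" "\<Delta> \<in> sets borel"
    and \<pi>\<delta>_mass: "(\<integral>\<^sup>+\<delta>\<in>\<Delta>. ennreal (\<pi>\<delta> \<delta>) \<partial>lborel) \<noteq> 0"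
  shows "sym_posterior_mass F n x y q \<Delta> \<pi>\<delta> > 0"
proof -
  note [measurable] = measurable_compose_uncurry[OF F]
  let ?D = "\<lambda>\<beta> \<sigma>. \<integral>\<^sup>+\<delta>\<in>\<Delta>. (\<Prod>j<n. ennreal (1 / \<sigma>) * F ((y j - x j \<bullet> \<beta>) / \<sigma>) \<delta>)
      * ennreal (\<pi>\<delta> \<delta>) * ennreal (\<sigma> powr (- q)) \<partial>lborel"
  have D_pos: "?D \<beta> \<sigma> > 0" if "\<sigma> > 0" for \<beta> \<sigma>
    by (rule nn_integral_pos_if_support[where g = "\<lambda>\<delta>. ennreal (\<pi>\<delta> \<delta>) * indicator \<Delta> \<delta>"])
      (use \<pi>\<delta>_mass that F_pos[THEN order_less_imp_not_eq2] in \<open>auto simp: indicator_def\<close>)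
  have \<sigma>_pos: "(\<integral>\<^sup>+\<sigma>\<in>{0<..}. ?D \<beta> \<sigma> \<partial>lborel) > 0" for \<beta>
    by (rule nn_integral_pos_if_support[where g = "indicator {0<..<1}"])
      (use D_pos[THEN order_less_imp_not_eq2] in \<open>auto simp: indicator_eq_0_iff\<close>)
  show ?thesis
    unfolding sym_posterior_mass_def
    by (rule nn_integral_pos_if_support[where g = "\<lambda>_. 1"])
      (use \<sigma>_pos[THEN order_less_imp_not_eq2] in auto)
qed

theorem theorem3p1:
  fixes n :: nat and x :: "nat \<Rightarrow> real ^ 'p" and y :: "nat \<Rightarrow> real"
    and H :: "real \<Rightarrow> real measure" and \<Delta> \<Gamma> :: "real set"
    and a b \<pi>\<gamma> \<pi>\<delta> :: "real \<Rightarrow> real" and q :: real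
  assumes full_rank: "\<And>\<beta>. (\<forall>j<n. x j \<bullet> \<beta> = 0) \<Longrightarrow> \<beta> = 0"
    and H_kernel: "H \<in> borel \<rightarrow>\<^sub>M prob_algebra borel"
    and H_pos: "\<And>\<delta>. \<delta> \<in> \<Delta> \<Longrightarrow> emeasure (H \<delta>) {..0} = 0"
    and Delta_meas: "\<Delta> \<in> sets borel" and Gamma_meas: "\<Gamma> \<in> sets borel"
    and a_meas: "a \<in> borel_measurable borel" and b_meas: "b \<in> borel_measurable borel"
    and a_pos: "\<And>\<gamma>. \<gamma> \<in> \<Gamma> \<Longrightarrow> a \<gamma> > 0" and b_pos: "\<And>\<gamma>. \<gamma> \<in> \<Gamma> \<Longrightarrow> b \<gamma> > 0"
    and q_nonneg: "q \<ge> 0"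
    and \<pi>\<gamma>_meas: "\<pi>\<gamma> \<in> borel_measurable borel" and \<pi>\<gamma>_nonneg: "\<And>\<gamma>. \<pi>\<gamma> \<gamma> \<ge> 0"
    and \<pi>\<gamma>_proper: "(\<integral>\<^sup>+ \<gamma>\<in>\<Gamma>. ennreal (\<pi>\<gamma> \<gamma>) \<partial>lborel) = 1"
    and \<pi>\<delta>_meas: "\<pi>\<delta> \<in> borel_measurable borel" and \<pi>\<delta>_nonneg: "\<And>\<delta>. \<pi>\<delta> \<delta> \<ge> 0"
    and \<pi>\<delta>_proper: "(\<integral>\<^sup>+ \<delta>\<in>\<Delta>. ennreal (\<pi>\<delta> \<delta>) \<partial>lborel) = 1"
  shows
    "(tp_posterior_mass (smn_density H) a b n x y q \<Delta> \<pi>\<delta> \<Gamma> \<pi>\<gamma> < \<infinity> \<longrightarrow>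
        sym_posterior_mass (smn_density H) n x y q \<Delta> \<pi>\<delta> < \<infinity> \<and>
        (\<integral>\<^sup>+ \<gamma>\<in>\<Gamma>. ennreal (min (a \<gamma>) (b \<gamma>) powr (real n + q - 1)
            / (a \<gamma> + b \<gamma>) ^ n * \<pi>\<gamma> \<gamma>) \<partial>lborel) < \<infinity>)
     \<and>
     ((sym_posterior_mass (smn_density H) n x y q \<Delta> \<pi>\<delta> < \<infinity> \<and>
        (\<integral>\<^sup>+ \<gamma>\<in>\<Gamma>. ennreal (max (a \<gamma>) (b \<gamma>) powr (real n + q - 1)
            / (a \<gamma> + b \<gamma>) ^ n * \<pi>\<gamma> \<gamma>) \<partial>lborel) < \<infinity>) \<longrightarrow>
        tp_posterior_mass (smn_density H) a b n x y q \<Delta> \<pi>\<delta> \<Gamma> \<pi>\<gamma> < \<infinity>)"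
proof (rule ennreal_finite_iff_sandwich)
  note [measurable] = a_meas b_meas \<pi>\<gamma>_meas \<pi>\<delta>_meas Gamma_meas Delta_meas
  note F = smn_density_measurable[OF H_kernel]
  let ?S = "sym_posterior_mass (smn_density H) n x y q \<Delta> \<pi>\<delta>"
  let ?T = "tp_posterior_mass (smn_density H) a b n x y q \<Delta> \<pi>\<delta> \<Gamma> \<pi>\<gamma>"
  let ?I = "\<lambda>c. \<integral>\<^sup>+\<gamma>\<in>\<Gamma>. ennreal (c (a \<gamma>) (b \<gamma>) powr (real n + q - 1) / (a \<gamma> + b \<gamma>) ^ n * \<pi>\<gamma> \<gamma>) \<partial>lborel"
  have min_weight_pos: "min (a \<gamma>) (b \<gamma>) powr (real n + q - 1) / (a \<gamma> + b \<gamma>) ^ n > 0" if "\<gamma> \<in> \<Gamma>" for \<gamma>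
    using a_pos[OF that] b_pos[OF that] by simp
  show "2 ^ n * ?I min * ?S \<le> ?T"
    by (rule tp_posterior_mass_lower_bound[OF F smn_density_antimono_abs]) (use assms in auto)
  show "?T \<le> 2 ^ n * ?I max * ?S"
    by (rule tp_posterior_mass_upper_bound[OF F smn_density_antimono_abs]) (use assms in auto)
  show "?I min > 0"
    by (rule set_nn_integral_weighted_pos) (use min_weight_pos \<pi>\<gamma>_proper in auto)
  show "?S > 0"
    by (rule sym_posterior_mass_pos[OF F smn_density_pos[OF H_kernel H_pos]]) (use \<pi>\<delta>_proper in auto)
qed (use ennreal_power[of 2 n] in \<open>auto simp: power_less_top_ennreal\<close>)

end
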